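(* Let $\gamma\subset\mathbb{R}^2$ be a circle of center $\boldsymbol{c}$ and radius $R=1/\kappa>0$, and let $\boldsymbol{x}\in\mathbb{R}^2\setminus\gamma$ with distance $r=|\|\boldsymbol{x}-\boldsymbol{c}\|_2-R|>0$ to $\gamma$, and assume $r\kappa<1$. Let $\boldsymbol{n}$ be the unit vector pointing from $\boldsymbol{x}$ to its closest point on $\gamma$, and let $\mathcal{T}$ be the tangent line to $\gamma$ at that closest point. Let $\boldsymbol{v}$ be a unit vector making an angle $\theta\in[0,\pi/2)$ with $\boldsymbol{n}$, let $\boldsymbol{u}=\frac{r}{\cos\theta}\boldsymbol{v}$ (so $\boldsymbol{x}+\boldsymbol{u}\in\mathcal{T}$), and let $\boldsymbol{x}_\gamma=\boldsymbol{x}+t\boldsymbol{v}$ where $t$ is the smallest $t\ge0$ with $\boldsymbol{x}+t\boldsymbol{v}\in\gamma$ (whenever such $t$ exists). Then: (i) whenever $\boldsymbol{x}_\gamma$ exists, $\displaystyle -C_1 r\kappa\tan^2\theta\le\frac{\|\boldsymbol{x}_\gamma-\boldsymbol{x}\|_2}{\|\boldsymbol{u}\|_2}-1$; (ii) if moreover $\tan^2\theta\le\frac{0.2}{r\kappa}$, then $\boldsymbol{x}_\gamma$ exists and $\displaystyle\frac{\|\boldsymbol{x}_\gamma-\boldsymbol{x}\|_2}{\|\boldsymbol{u}\|_2}-1\le C_2r\kappa\tan^2\theta$, with $C_1=0.625$ and $C_2=2.25$. *)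

theory Defs
  imports "HOL-Analysis.Analysis"
begin

definition closest_pt :: "real^2 \<Rightarrow> real \<Rightarrow> real^2 \<Rightarrow> real^2" where
  "closest_pt c R x = c + (R / norm (x - c)) *\<^sub>R (x - c)"

definition first_hit :: "real^2 \<Rightarrow> real \<Rightarrow> real^2 \<Rightarrow> real^2 \<Rightarrow> real^2 \<Rightarrow> bool" where
  "first_hit c R x v y \<longleftrightarrow> (\<exists>t\<ge>0. y = x + t *\<^sub>R v \<and> y \<in> sphere c R \<and>
      (\<forall>s. 0 \<le> s \<and> s < t \<longrightarrow> x + s *\<^sub>R v \<notin> sphere c R))"

end

theory Submission
  imports Defs
begin

text \<open>Along the ray x + t v the squared distance to the centre is a quadratic in t, so the hitting
  time solves a quadratic equation. Measured in units of the tangent-line distance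
  |u| = r / cos \<theta>, it becomes the root p of e (1 + T) p^2 \<pm> 2 (1 \<mp> e) p \<mp> (2 \<mp> e) = 0
  with e = r\<kappa> and T = (tan \<theta>)^2 (upper signs for x inside the circle, lower signs outside).
  Factoring out p - 1 and bounding the cofactor gives 0 \<le> 1 - p \<le> eT/2 inside and
  0 \<le> p - 1 \<le> 2eT outside; the latter uses that the first hit from outside lies before the foot of
  the perpendicular from the centre. Existence is automatic inside, and outside it holds once that
  foot lies in the disc, which eT \<le> 1/5 guarantees.\<close>

lemma quadratic_root_bounds_inside:
  fixes e T p :: real
  assumes "0 < e" "e < 1" "0 \<le> T" "0 \<le> p"
    and root: "e * (1 + T) * p\<^sup>2 + 2 * (1 - e) * p - (2 - e) = 0"
  shows "p \<le> 1" and "1 - p \<le> e * T / 2"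
proof -
  define s where "s = 1 - e + e * (1 + T) * p"
  have "0 < s"
    using assms unfolding s_def by (simp add: add_pos_nonneg)
  have "s\<^sup>2 = 1 + e * T * (2 - e) + e * (1 + T) * (e * (1 + T) * p\<^sup>2 + 2 * (1 - e) * p - (2 - e))"
    unfolding s_def by (simp add: algebra_simps power2_eq_square)
  then have "1\<^sup>2 \<le> s\<^sup>2"
    using root assms(1,2,3) by simp
  then have "1 \<le> s"
    by (rule power2_le_imp_le) (use \<open>0 < s\<close> in linarith)
  have "0 \<le> e * T"
    using assms by simp
  have "(1 - p) * (1 + e * T + s) = e * T"
    using root unfolding s_def by (simp add: algebra_simps power2_eq_square)
  then have quotient: "1 - p = e * T / (1 + e * T + s)"
    using \<open>0 \<le> e * T\<close> \<open>0 < s\<close> by (simp add: eq_divide_eq)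
  moreover have "0 \<le> e * T / (1 + e * T + s)"
    using \<open>0 \<le> e * T\<close> \<open>0 < s\<close> by (intro divide_nonneg_pos) simp_all
  ultimately show "p \<le> 1"
    by linarith
  have "e * T / (1 + e * T + s) \<le> e * T / 2"
    using \<open>0 \<le> e * T\<close> \<open>1 \<le> s\<close> by (intro divide_left_mono) simp_all
  then show "1 - p \<le> e * T / 2"
    unfolding quotient .
qed

lemma quadratic_root_bounds_outside:
  fixes e T p :: real
  assumes "0 < e" "0 \<le> T"
    and root: "e * (1 + T) * p\<^sup>2 - 2 * (1 + e) * p + (2 + e) = 0"
    and before_vertex: "e * (1 + T) * p \<le> 1 + e"
  shows "1 \<le> p" and "p - 1 \<le> 2 * e * T"
proof -
  define s where "s = 1 + e - e * (1 + T) * p"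
  have "0 \<le> s"
    using before_vertex unfolding s_def by simp
  have "s\<^sup>2 = 1 - e * T * (2 + e) + e * (1 + T) * (e * (1 + T) * p\<^sup>2 - 2 * (1 + e) * p + (2 + e))"
    unfolding s_def by (simp add: algebra_simps power2_eq_square)
  then have "e * T * (2 + e) \<le> 1"
    using root zero_le_power2[of s] by simp
  moreover have "e * T * 2 \<le> e * T * (2 + e)"
    using assms by (intro mult_left_mono) simp_all
  ultimately have "1 / 2 \<le> 1 - e * T + s"
    using \<open>0 \<le> s\<close> by simp
  have "0 \<le> e * T"
    using assms by simp
  have "(p - 1) * (1 - e * T + s) = e * T"
    using root unfolding s_def by (simp add: algebra_simps power2_eq_square)
  then have quotient: "p - 1 = e * T / (1 - e * T + s)"
    using \<open>1 / 2 \<le> 1 - e * T + s\<close> by (simp add: eq_divide_eq)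
  moreover have "0 \<le> e * T / (1 - e * T + s)"
    using \<open>0 \<le> e * T\<close> \<open>1 / 2 \<le> 1 - e * T + s\<close> by (intro divide_nonneg_pos) simp_all
  ultimately show "1 \<le> p"
    by linarith
  have "e * T / (1 - e * T + s) \<le> e * T / (1 / 2)"
    using \<open>0 \<le> e * T\<close> \<open>1 / 2 \<le> 1 - e * T + s\<close> by (intro divide_left_mono) simp_all
  then show "p - 1 \<le> 2 * e * T"
    unfolding quotient by simp
qed

lemma power2_norm_ray:
  fixes c x v :: "'a::real_inner"
  assumes "norm v = 1"
  shows "(norm (x + s *\<^sub>R v - c))\<^sup>2 = s\<^sup>2 + 2 * s * (v \<bullet> (x - c)) + (norm (x - c))\<^sup>2"
proof -
  have "x + s *\<^sub>R v - c = (x - c) + s *\<^sub>R v"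
    by simp
  then show ?thesis
    using assms by (simp only: power2_norm_eq_inner norm_eq_1)
      (simp add: inner_add_left inner_add_right inner_commute power2_eq_square)
qed

lemma ray_in_sphere_iff:
  fixes c x v :: "'a::real_inner"
  assumes "norm v = 1" and "0 \<le> R"
  shows "x + s *\<^sub>R v \<in> sphere c R \<longleftrightarrow> s\<^sup>2 + 2 * s * (v \<bullet> (x - c)) + (norm (x - c))\<^sup>2 = R\<^sup>2"
proof -
  have "x + s *\<^sub>R v \<in> sphere c R \<longleftrightarrow> (norm (x + s *\<^sub>R v - c))\<^sup>2 = R\<^sup>2"
    using assms(2) by (simp add: dist_norm norm_minus_commute power2_eq_iff_nonneg)
  then show ?thesis
    using power2_norm_ray[OF assms(1)] by simp
qed

lemma first_hit_exists_of_hit: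
  assumes "0 \<le> t" and "x + t *\<^sub>R v \<in> sphere c R"
  shows "\<exists>y. first_hit c R x v y"
proof -
  define S where "S = {s. 0 \<le> s \<and> x + s *\<^sub>R v \<in> sphere c R}"
  have "closed S"
    unfolding S_def sphere_def mem_Collect_eq
    by (intro closed_Collect_conj closed_Collect_le closed_Collect_eq continuous_intros)
  moreover have "S \<noteq> {}" and "bdd_below S"
    using assms unfolding S_def bdd_below_def by auto
  ultimately have "Inf S \<in> S"
    by (rule closed_contains_Inf[rotated 2])
  moreover have "s \<notin> S" if "s < Inf S" for s
    using that cInf_lower[OF _ \<open>bdd_below S\<close>] by force
  ultimately show ?thesis
    unfolding first_hit_def S_def by blast
qed

lemma first_hit_exists_of_crossing:
  assumes "0 \<le> t"
    and "norm (x - c) \<le> R \<and> R \<le> norm (x + t *\<^sub>R v - c) \<or>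
      norm (x + t *\<^sub>R v - c) \<le> R \<and> R \<le> norm (x - c)"
  shows "\<exists>y. first_hit c R x v y"
proof -
  define f where "f s = norm (x + s *\<^sub>R v - c)" for s
  have "continuous_on {0..t} f"
    unfolding f_def by (intro continuous_intros)
  then have "\<exists>s. 0 \<le> s \<and> s \<le> t \<and> f s = R"
    using assms IVT'[of f 0 R t] IVT2'[of f t R 0] unfolding f_def by fastforce
  then obtain s where "0 \<le> s" "norm (x + s *\<^sub>R v - c) = R"
    unfolding f_def by blast
  then show ?thesis
    by (intro first_hit_exists_of_hit[of s]) (simp_all add: dist_norm norm_minus_commute)
qed

lemma first_hit_exists_inside:
  assumes "norm v = 1" and "norm (x - c) \<le> R"
  shows "\<exists>y. first_hit c R x v y"
proof (rule first_hit_exists_of_crossing)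
  have "2 * R \<le> norm (x - c) + norm (x + (2 * R) *\<^sub>R v - c)"
    using norm_triangle_ineq4[of "x + (2 * R) *\<^sub>R v - c" "x - c"] assms by simp
  then show "norm (x - c) \<le> R \<and> R \<le> norm (x + (2 * R) *\<^sub>R v - c) \<or>
      norm (x + (2 * R) *\<^sub>R v - c) \<le> R \<and> R \<le> norm (x - c)"
    using assms(2) by simp
  show "0 \<le> 2 * R"
    using assms(2) norm_ge_zero[of "x - c"] by linarith
qed

text \<open>From outside, the ray reaches the sphere as soon as the foot of the perpendicular from the
  centre onto the line lies in the closed disc.\<close>
lemma first_hit_exists_outside:
  assumes "norm v = 1" and "v \<bullet> (x - c) \<le> 0" and "0 \<le> R" and "R \<le> norm (x - c)"
    and "(norm (x - c))\<^sup>2 - (v \<bullet> (x - c))\<^sup>2 \<le> R\<^sup>2"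
  shows "\<exists>y. first_hit c R x v y"
proof (rule first_hit_exists_of_crossing)
  define b where "b = v \<bullet> (x - c)"
  have "(norm (x + (- b) *\<^sub>R v - c))\<^sup>2 = (norm (x - c))\<^sup>2 - b\<^sup>2"
    using power2_norm_ray[OF assms(1), of x "- b" c] unfolding b_def by (simp add: power2_eq_square)
  then have "(norm (x + (- b) *\<^sub>R v - c))\<^sup>2 \<le> R\<^sup>2"
    using assms(5) unfolding b_def by linarith
  then have "norm (x + (- b) *\<^sub>R v - c) \<le> R"
    using assms(3) by (rule power2_le_imp_le)
  then show "norm (x - c) \<le> R \<and> R \<le> norm (x + (- b) *\<^sub>R v - c) \<or>
      norm (x + (- b) *\<^sub>R v - c) \<le> R \<and> R \<le> norm (x - c)"
    using assms(4) by simp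
  show "0 \<le> - b"
    using assms(2) unfolding b_def by simp
qed

lemma first_hit_on_ray:
  assumes "first_hit c R x v y" and "norm v = 1" and "0 \<le> R"
  shows "y = x + norm (y - x) *\<^sub>R v"
    and "(norm (y - x))\<^sup>2 + 2 * norm (y - x) * (v \<bullet> (x - c)) + (norm (x - c))\<^sup>2 = R\<^sup>2"
proof -
  obtain t where "0 \<le> t" "y = x + t *\<^sub>R v" "y \<in> sphere c R"
    using assms(1) unfolding first_hit_def by blast
  moreover from this have "norm (y - x) = t"
    using assms(2) by simp
  ultimately show "y = x + norm (y - x) *\<^sub>R v"
    and "(norm (y - x))\<^sup>2 + 2 * norm (y - x) * (v \<bullet> (x - c)) + (norm (x - c))\<^sup>2 = R\<^sup>2"
    using ray_in_sphere_iff[OF assms(2,3), of x t c] assms(2) by simp_all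
qed

text \<open>The two crossings of the line are symmetric about the foot of the perpendicular from the
  centre; from outside both lie ahead of x, so the first one comes before the foot.\<close>
lemma first_hit_before_foot:
  assumes "first_hit c R x v y" and "norm v = 1" and "0 \<le> R" and "R < norm (x - c)"
  shows "norm (y - x) \<le> - (v \<bullet> (x - c))"
proof (rule ccontr)
  define t b d where "t = norm (y - x)" and "b = v \<bullet> (x - c)" and "d = norm (x - c)"
  assume "\<not> norm (y - x) \<le> - (v \<bullet> (x - c))"
  then have "- b < t"
    unfolding t_def b_def by simp
  have root: "t\<^sup>2 + 2 * t * b + d\<^sup>2 = R\<^sup>2"
    using first_hit_on_ray(2)[OF assms(1-3)] unfolding t_def b_def d_def .
  define s where "s = - 2 * b - t"
  have "s\<^sup>2 + 2 * s * b + d\<^sup>2 = R\<^sup>2"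
    using root unfolding s_def by (simp add: algebra_simps power2_eq_square)
  moreover have "t * s = d\<^sup>2 - R\<^sup>2"
    using root unfolding s_def by (simp add: algebra_simps power2_eq_square)
  then have "0 < t * s"
    using assms(3,4) unfolding d_def by (simp add: power_strict_mono)
  then have "0 < s"
    using t_def by (simp add: zero_less_mult_iff)
  moreover have "s < t"
    using \<open>- b < t\<close> unfolding s_def by simp
  moreover have "\<forall>s. 0 \<le> s \<and> s < t \<longrightarrow> x + s *\<^sub>R v \<notin> sphere c R"
    using assms(1) first_hit_on_ray(1)[OF assms(1-3)] assms(2)
    unfolding first_hit_def t_def by force
  ultimately show False
    using ray_in_sphere_iff[OF assms(2,3)] unfolding b_def d_def by force
qed

lemma sgn_closest_pt_minus:
  assumes "x \<noteq> c"
  shows "sgn (closest_pt c R x - x) = sgn (R - norm (x - c)) *\<^sub>R sgn (x - c)"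
proof -
  have "closest_pt c R x - x = ((R - norm (x - c)) / norm (x - c)) *\<^sub>R (x - c)"
    using assms unfolding closest_pt_def by (simp add: algebra_simps diff_divide_distrib)
  then show ?thesis
    using assms by (simp add: sgn_scaleR)
qed

lemma closest_pt_angle_cases:
  fixes c x v :: "real^2"
  assumes "x \<notin> sphere c R" and "r = \<bar>norm (x - c) - R\<bar>" and "r < R"
    and "v \<bullet> sgn (closest_pt c R x - x) = cos \<theta>"
  shows "norm (x - c) = R - r \<and> v \<bullet> (x - c) = norm (x - c) * cos \<theta> \<or>
    norm (x - c) = R + r \<and> v \<bullet> (x - c) = - (norm (x - c) * cos \<theta>)"
proof -
  define d where "d = norm (x - c)"
  have "0 < d"
    using assms(2,3) unfolding d_def by auto
  have "d \<noteq> R"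
    using assms(1) unfolding d_def by (simp add: dist_norm norm_minus_commute)
  have "sgn (x - c) = (1 / d) *\<^sub>R (x - c)"
    unfolding d_def by (simp add: sgn_div_norm divide_inverse)
  moreover have "x \<noteq> c"
    using \<open>0 < d\<close> unfolding d_def by auto
  ultimately have "sgn (R - d) * (v \<bullet> (x - c)) / d = cos \<theta>"
    using assms(4) sgn_closest_pt_minus[of x c R] unfolding d_def by simp
  then have "sgn (R - d) * (v \<bullet> (x - c)) = d * cos \<theta>"
    using \<open>0 < d\<close> by (simp add: field_simps)
  then show ?thesis
    using assms(2) \<open>d \<noteq> R\<close> unfolding d_def by (cases "norm (x - c) < R") simp_all
qed

lemma one_plus_tan_square:
  fixes \<theta> :: real
  assumes "cos \<theta> \<noteq> 0"
  shows "1 + (tan \<theta>)\<^sup>2 = 1 / (cos \<theta>)\<^sup>2"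
  using tan_sec[OF assms] by (simp add: inverse_eq_divide power_divide)

lemma first_hit_ratio_inside:
  fixes c x v y :: "real^2"
  assumes hit: "first_hit c R x v y" and "norm v = 1"
    and "0 < r" and "r < R" and "norm (x - c) = R - r"
    and "v \<bullet> (x - c) = norm (x - c) * cos \<theta>" and "0 < cos \<theta>"
  shows "norm (y - x) * cos \<theta> / r \<le> 1"
    and "1 - norm (y - x) * cos \<theta> / r \<le> r / R * (tan \<theta>)\<^sup>2 / 2"
proof -
  define t where "t = norm (y - x)"
  have sec_sq: "1 + (tan \<theta>)\<^sup>2 = 1 / (cos \<theta>)\<^sup>2"
    using assms(7) by (simp add: one_plus_tan_square)
  have "t\<^sup>2 + 2 * t * ((R - r) * cos \<theta>) + (R - r)\<^sup>2 = R\<^sup>2"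
    using first_hit_on_ray(2)[OF hit assms(2)] assms(3-6) unfolding t_def by simp
  moreover have "r / R * (1 + (tan \<theta>)\<^sup>2) * (t * cos \<theta> / r)\<^sup>2 + 2 * (1 - r / R) * (t * cos \<theta> / r)
      - (2 - r / R) = (t\<^sup>2 + 2 * t * ((R - r) * cos \<theta>) + (R - r)\<^sup>2 - R\<^sup>2) / (r * R)"
    unfolding sec_sq using assms(3,4,7) by (simp add: field_simps power2_eq_square)
  ultimately have "r / R * (1 + (tan \<theta>)\<^sup>2) * (t * cos \<theta> / r)\<^sup>2 + 2 * (1 - r / R) * (t * cos \<theta> / r)
      - (2 - r / R) = 0"
    by simp
  then show "norm (y - x) * cos \<theta> / r \<le> 1"
    and "1 - norm (y - x) * cos \<theta> / r \<le> r / R * (tan \<theta>)\<^sup>2 / 2"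
    using quadratic_root_bounds_inside[of "r / R" "(tan \<theta>)\<^sup>2" "t * cos \<theta> / r"] assms(3,4,7)
    unfolding t_def by simp_all
qed

lemma first_hit_ratio_outside:
  fixes c x v y :: "real^2"
  assumes hit: "first_hit c R x v y" and "norm v = 1"
    and "0 < r" and "0 < R" and "norm (x - c) = R + r"
    and "v \<bullet> (x - c) = - (norm (x - c) * cos \<theta>)" and "0 < cos \<theta>"
  shows "1 \<le> norm (y - x) * cos \<theta> / r"
    and "norm (y - x) * cos \<theta> / r - 1 \<le> 2 * (r / R * (tan \<theta>)\<^sup>2)"
proof -
  define t where "t = norm (y - x)"
  have sec_sq: "1 + (tan \<theta>)\<^sup>2 = 1 / (cos \<theta>)\<^sup>2"
    using assms(7) by (simp add: one_plus_tan_square)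
  have "t\<^sup>2 - 2 * t * ((R + r) * cos \<theta>) + (R + r)\<^sup>2 = R\<^sup>2"
    using first_hit_on_ray(2)[OF hit assms(2)] assms(4-6) unfolding t_def by simp
  moreover have "r / R * (1 + (tan \<theta>)\<^sup>2) * (t * cos \<theta> / r)\<^sup>2 - 2 * (1 + r / R) * (t * cos \<theta> / r)
      + (2 + r / R) = (t\<^sup>2 - 2 * t * ((R + r) * cos \<theta>) + (R + r)\<^sup>2 - R\<^sup>2) / (r * R)"
    unfolding sec_sq using assms(3,4,7) by (simp add: field_simps power2_eq_square)
  ultimately have root: "r / R * (1 + (tan \<theta>)\<^sup>2) * (t * cos \<theta> / r)\<^sup>2
      - 2 * (1 + r / R) * (t * cos \<theta> / r) + (2 + r / R) = 0"
    by simp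
  have "t \<le> (R + r) * cos \<theta>"
    using first_hit_before_foot[OF hit assms(2)] assms(3-6) unfolding t_def by simp
  then have "t / (R * cos \<theta>) \<le> (R + r) / R"
    using assms(4,7) by (simp add: field_simps)
  moreover have "r / R * (1 + (tan \<theta>)\<^sup>2) * (t * cos \<theta> / r) = t / (R * cos \<theta>)"
    unfolding sec_sq using assms(3,4,7) by (simp add: field_simps power2_eq_square)
  moreover have "1 + r / R = (R + r) / R"
    using assms(4) by (simp add: field_simps)
  ultimately have "r / R * (1 + (tan \<theta>)\<^sup>2) * (t * cos \<theta> / r) \<le> 1 + r / R"
    by simp
  then show "1 \<le> norm (y - x) * cos \<theta> / r"
    and "norm (y - x) * cos \<theta> / r - 1 \<le> 2 * (r / R * (tan \<theta>)\<^sup>2)"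
    using quadratic_root_bounds_outside[of "r / R" "(tan \<theta>)\<^sup>2" "t * cos \<theta> / r"] root assms(3,4)
    unfolding t_def by simp_all
qed

lemma first_hit_exists_outside_small_angle:
  fixes c x v :: "real^2"
  assumes "norm v = 1" and "0 < r" and "r < R" and "norm (x - c) = R + r"
    and "v \<bullet> (x - c) = - (norm (x - c) * cos \<theta>)" and "0 < cos \<theta>"
    and "r / R * (tan \<theta>)\<^sup>2 \<le> 1 / 5"
  shows "\<exists>y. first_hit c R x v y"
proof (rule first_hit_exists_outside)
  have sec_sq: "1 + (tan \<theta>)\<^sup>2 = 1 / (cos \<theta>)\<^sup>2"
    using assms(6) by (simp add: one_plus_tan_square)
  have "r * (tan \<theta>)\<^sup>2 \<le> R / 5"
    using assms(2,3,7) by (simp add: field_simps)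
  then have "r * (tan \<theta>)\<^sup>2 * (2 * R + r) \<le> R / 5 * (3 * R)"
    using assms(2,3) by (intro mult_mono) simp_all
  also have "\<dots> \<le> R\<^sup>2"
    by (simp add: power2_eq_square)
  finally have "(R + r)\<^sup>2 * (tan \<theta>)\<^sup>2 \<le> R\<^sup>2 * (1 + (tan \<theta>)\<^sup>2)"
    by (simp add: algebra_simps power2_eq_square)
  then have "(R + r)\<^sup>2 * (tan \<theta>)\<^sup>2 * (cos \<theta>)\<^sup>2 \<le> R\<^sup>2"
    using assms(6) unfolding sec_sq by (simp add: field_simps)
  moreover have "(tan \<theta>)\<^sup>2 * (cos \<theta>)\<^sup>2 = 1 - (cos \<theta>)\<^sup>2"
    using assms(6) by (simp add: tan_def power_divide sin_squared_eq)
  moreover have "(norm (x - c))\<^sup>2 - (v \<bullet> (x - c))\<^sup>2 = (R + r)\<^sup>2 * (1 - (cos \<theta>)\<^sup>2)"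
    using assms(4,5) by (simp add: power_mult_distrib right_diff_distrib)
  ultimately show "(norm (x - c))\<^sup>2 - (v \<bullet> (x - c))\<^sup>2 \<le> R\<^sup>2"
    by (simp add: mult.assoc)
  show "v \<bullet> (x - c) \<le> 0" and "0 \<le> R" and "R \<le> norm (x - c)"
    using assms(2-6) by simp_all
qed (fact assms(1))

lemma first_hit_ratio_bounds:
  fixes c x v y :: "real^2"
  assumes "first_hit c R x v y" and "norm v = 1" and "0 < r" and "r < R" and "0 < cos \<theta>"
    and "norm (x - c) = R - r \<and> v \<bullet> (x - c) = norm (x - c) * cos \<theta> \<or>
      norm (x - c) = R + r \<and> v \<bullet> (x - c) = - (norm (x - c) * cos \<theta>)"
  shows "- (r / R * (tan \<theta>)\<^sup>2 / 2) \<le> norm (y - x) * cos \<theta> / r - 1"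
    and "norm (y - x) * cos \<theta> / r - 1 \<le> 2 * (r / R * (tan \<theta>)\<^sup>2)"
proof -
  define E p where "E = r / R * (tan \<theta>)\<^sup>2" and "p = norm (y - x) * cos \<theta> / r"
  have "0 < R"
    using assms(3,4) by simp
  have "0 \<le> E"
    using assms(3,4) unfolding E_def by simp
  from assms(6) have "- (E / 2) \<le> p - 1 \<and> p - 1 \<le> 2 * E"
  proof (elim disjE conjE)
    assume "norm (x - c) = R - r" and "v \<bullet> (x - c) = norm (x - c) * cos \<theta>"
    from first_hit_ratio_inside[OF assms(1-4) this assms(5), folded E_def p_def] show ?thesis
      using \<open>0 \<le> E\<close> by linarith
  next
    assume "norm (x - c) = R + r" and "v \<bullet> (x - c) = - (norm (x - c) * cos \<theta>)"
    from first_hit_ratio_outside[OF assms(1-3) \<open>0 < R\<close> this assms(5), folded E_def p_def] show ?thesis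
      using \<open>0 \<le> E\<close> by linarith
  qed
  then show "- (r / R * (tan \<theta>)\<^sup>2 / 2) \<le> norm (y - x) * cos \<theta> / r - 1"
    and "norm (y - x) * cos \<theta> / r - 1 \<le> 2 * (r / R * (tan \<theta>)\<^sup>2)"
    unfolding E_def p_def by simp_all
qed

theorem lemma4:
  fixes c x v :: "real^2" and R \<kappa> r \<theta> :: real
  assumes "R > 0" and "\<kappa> = 1 / R"
    and "x \<notin> sphere c R"
    and "r = \<bar>norm (x - c) - R\<bar>" and "r > 0" and "r * \<kappa> < 1"
    and "norm v = 1" and "0 \<le> \<theta>" and "\<theta> < pi / 2"
    and "v \<bullet> ((closest_pt c R x - x) /\<^sub>R norm (closest_pt c R x - x)) = cos \<theta>"
  shows "(\<forall>y. first_hit c R x v y \<longrightarrow>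
            - 0.625 * r * \<kappa> * (tan \<theta>)\<^sup>2 \<le> norm (y - x) / norm ((r / cos \<theta>) *\<^sub>R v) - 1)
       \<and> ((tan \<theta>)\<^sup>2 \<le> 0.2 / (r * \<kappa>) \<longrightarrow>
            (\<exists>y. first_hit c R x v y) \<and>
            (\<forall>y. first_hit c R x v y \<longrightarrow>
               norm (y - x) / norm ((r / cos \<theta>) *\<^sub>R v) - 1 \<le> 2.25 * r * \<kappa> * (tan \<theta>)\<^sup>2))"
proof -
  have "0 < cos \<theta>"
    using assms(8,9) by (intro cos_gt_zero_pi) simp_all
  have "r = r * \<kappa> * R"
    using assms(1,2) by simp
  also have "\<dots> < 1 * R"
    using assms(1,6) by (intro mult_strict_right_mono)
  finally have "r < R"
    by simp
  have aligned: "norm (x - c) = R - r \<and> v \<bullet> (x - c) = norm (x - c) * cos \<theta> \<or>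
      norm (x - c) = R + r \<and> v \<bullet> (x - c) = - (norm (x - c) * cos \<theta>)"
    using closest_pt_angle_cases[OF assms(3,4) \<open>r < R\<close>] assms(10) by (simp add: sgn_div_norm)
  define E where "E = r / R * (tan \<theta>)\<^sup>2"
  have "0 \<le> E"
    using assms(1,5) unfolding E_def by simp
  have ratio: "norm (y - x) / norm ((r / cos \<theta>) *\<^sub>R v) = norm (y - x) * cos \<theta> / r" for y
    using assms(5,7) \<open>0 < cos \<theta>\<close> by simp
  have scaled: "- 0.625 * r * \<kappa> * (tan \<theta>)\<^sup>2 = - (5 / 8 * E)"
    "2.25 * r * \<kappa> * (tan \<theta>)\<^sup>2 = 9 / 4 * E"
    unfolding E_def assms(2) by simp_all
  have small_angle: "(tan \<theta>)\<^sup>2 \<le> 0.2 / (r * \<kappa>) \<longleftrightarrow> E \<le> 1 / 5"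
    unfolding E_def assms(2) using assms(1,5) by (simp add: field_simps)
  have "- (5 / 8 * E) \<le> norm (y - x) * cos \<theta> / r - 1 \<and> norm (y - x) * cos \<theta> / r - 1 \<le> 9 / 4 * E"
    if "first_hit c R x v y" for y
    using first_hit_ratio_bounds[OF that assms(7,5) \<open>r < R\<close> \<open>0 < cos \<theta>\<close> aligned, folded E_def]
      \<open>0 \<le> E\<close> by (intro conjI) linarith+
  moreover have "\<exists>y. first_hit c R x v y" if "E \<le> 1 / 5"
    using aligned first_hit_exists_inside[OF assms(7), of x c R]
      first_hit_exists_outside_small_angle[OF assms(7,5) \<open>r < R\<close> _ _ \<open>0 < cos \<theta>\<close>] that assms(5)
    unfolding E_def by auto
  ultimately show ?thesis
    unfolding ratio scaled small_angle by blast
qed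

end
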